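(* Let $(V,\mathcal{E})$ be an arbitrary hypergraph with node set $V=\{v_1,\dots,v_N\}$ and hyperedges $\mathcal{E}=\{e_1,\dots,e_M\}$, $e_i\subset V$. Consider the SIS epidemic on it, i.e. the continuous-time Markov chain on $\{S,I\}^N$ with recovery rate $\gamma>0$, per-contact infection rate $\tau>0$, and nonlinearity $f(x)=x$ for $0\le x\le c$, $f(x)=c$ for $x>c$ (with $c>0$ a parameter), as described in the context. Let $X_\sigma(t)$ be the probability that the chain is in state $\sigma$ at time $t$ (these satisfy the Kolmogorov forward/master equations of the chain), and define $$[I](t)=\sum_{\sigma\in\{S,I\}^N} |\sigma|_I\, X_\sigma(t),\qquad [S](t)=\sum_{\sigma} (N-|\sigma|_I)\, X_\sigma(t),\qquad [SI](t)=\sum_{\sigma} N^f_{SI}(\sigma)\, X_\sigma(t),$$ where $|\sigma|_I$ is the number of infected nodes in $\sigma$ and $N^f_{SI}(\sigma)=\sum_{l:\ \sigma(l)=S}\ \sum_{h\in\mathcal{E}:\ v_l\in h} f\big(N_h(\sigma)\big)$. Then $$\dot{[S]}=\gamma[I]-\tau[SI],\qquad \dot{[I]}=\tau[SI]-\gamma[I].$$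
   Context: States are $\sigma\in\{S,I\}^N$, where $\sigma(l)$ is the state (susceptible $S$ or infected $I$) of node $v_l$. For a hyperedge $h$, $N_h(\sigma)$ denotes the number of infected nodes of $h$ in state $\sigma$. Transitions of the Markov chain: an infected node $v_l$ becomes susceptible (all other nodes unchanged) at rate $\gamma$; a susceptible node $v_l$ becomes infected (all other nodes unchanged) at rate $\tau\sum_{h\in\mathcal{E}:\,v_l\in h} f(N_h(\sigma))$, where $\sigma$ is the current state. No other transitions occur. *)

theory Defs
  imports "HOL-Analysis.Analysis"
begin

text \<open>Nodes are the elements of a finite type 'v (so V = UNIV, N = CARD('v)).
  A state sigma :: 'v => bool assigns True to infected and False to susceptible nodes.\<close>

definition f_sat :: "real \<Rightarrow> real \<Rightarrow> real" where
  "f_sat c x = (if x \<le> c then x else c)"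

definition N_inf :: "'v set \<Rightarrow> ('v \<Rightarrow> bool) \<Rightarrow> nat" where
  "N_inf h \<sigma> = card {v \<in> h. \<sigma> v}"

definition sis_rate :: "real \<Rightarrow> real \<Rightarrow> (real \<Rightarrow> real) \<Rightarrow> 'v set set
    \<Rightarrow> ('v::finite \<Rightarrow> bool) \<Rightarrow> ('v \<Rightarrow> bool) \<Rightarrow> real" where
  "sis_rate gam tau f E \<sigma> \<sigma>' =
     (\<Sum>l\<in>UNIV. if \<sigma>' = \<sigma>(l := \<not> \<sigma> l)
                 then (if \<sigma> l then gam
                       else tau * (\<Sum>h\<in>{h \<in> E. l \<in> h}. f (real (N_inf h \<sigma>))))
                 else 0)"

definition num_inf :: "('v::finite \<Rightarrow> bool) \<Rightarrow> nat" where
  "num_inf \<sigma> = card {l. \<sigma> l}"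

definition N_SI :: "(real \<Rightarrow> real) \<Rightarrow> 'v set set \<Rightarrow> ('v::finite \<Rightarrow> bool) \<Rightarrow> real" where
  "N_SI f E \<sigma> = (\<Sum>l\<in>{l. \<not> \<sigma> l}. \<Sum>h\<in>{h \<in> E. l \<in> h}. f (real (N_inf h \<sigma>)))"

end

theory Submission
  imports Defs
begin

text \<open>For any observable g of a finite-state chain, the master equation gives
  d/dt E[g] = E[Q g], where (Q g)(\<rho>) = \<Sum>\<sigma> Q \<rho> \<sigma> (g \<sigma> - g \<rho>) is the generator.
  In the SIS chain only single-node flips have positive rate, and flipping node l
  changes the number of infected nodes by +1 (rate \<tau> times the hyperedge pressure
  on a susceptible l) or by -1 (rate \<gamma> on an infected l). Summing over l turns the
  generator applied to |\<sigma>|_I into \<tau> N_SI(\<sigma>) - \<gamma> |\<sigma>|_I, and |\<sigma>|_S = N - |\<sigma>|_I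
  gives the opposite drift.\<close>

lemma expectation_has_real_derivative_master:
  fixes X :: "'s::finite \<Rightarrow> real \<Rightarrow> real" and Q :: "'s \<Rightarrow> 's \<Rightarrow> real" and g :: "'s \<Rightarrow> real"
  assumes master: "\<And>\<sigma>. (X \<sigma> has_real_derivative
          ((\<Sum>\<sigma>'\<in>UNIV - {\<sigma>}. X \<sigma>' t * Q \<sigma>' \<sigma>) - X \<sigma> t * (\<Sum>\<sigma>'\<in>UNIV - {\<sigma>}. Q \<sigma> \<sigma>'))) (at t within S)"
  shows "((\<lambda>s. \<Sum>\<sigma>\<in>UNIV. g \<sigma> * X \<sigma> s) has_real_derivative
     (\<Sum>\<rho>\<in>UNIV. X \<rho> t * (\<Sum>\<sigma>\<in>UNIV. Q \<rho> \<sigma> * (g \<sigma> - g \<rho>)))) (at t within S)"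
proof -
  have off_diag: "(\<Sum>\<sigma>'\<in>UNIV - {\<sigma>}. k \<sigma>') = (\<Sum>\<sigma>'\<in>UNIV. k \<sigma>') - k \<sigma>" for \<sigma> and k :: "'s \<Rightarrow> real"
    by (simp add: sum_diff1)
  have "((\<lambda>s. \<Sum>\<sigma>\<in>UNIV. g \<sigma> * X \<sigma> s) has_real_derivative
     (\<Sum>\<sigma>\<in>UNIV. g \<sigma> * ((\<Sum>\<sigma>'\<in>UNIV. X \<sigma>' t * Q \<sigma>' \<sigma>) - X \<sigma> t * (\<Sum>\<sigma>'\<in>UNIV. Q \<sigma> \<sigma>'))))
     (at t within S)"
  proof (intro DERIV_sum DERIV_cmult)
    fix \<sigma>
    show "(X \<sigma> has_real_derivative
        (\<Sum>\<sigma>'\<in>UNIV. X \<sigma>' t * Q \<sigma>' \<sigma>) - X \<sigma> t * (\<Sum>\<sigma>'\<in>UNIV. Q \<sigma> \<sigma>')) (at t within S)"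
      using master[of \<sigma>] by (simp add: off_diag algebra_simps)
  qed
  also have "(\<Sum>\<sigma>\<in>UNIV. g \<sigma> * ((\<Sum>\<sigma>'\<in>UNIV. X \<sigma>' t * Q \<sigma>' \<sigma>) - X \<sigma> t * (\<Sum>\<sigma>'\<in>UNIV. Q \<sigma> \<sigma>')))
     = (\<Sum>\<sigma>\<in>UNIV. \<Sum>\<rho>\<in>UNIV. X \<rho> t * Q \<rho> \<sigma> * g \<sigma>)
       - (\<Sum>\<rho>\<in>UNIV. \<Sum>\<sigma>\<in>UNIV. X \<rho> t * Q \<rho> \<sigma> * g \<rho>)"
    by (simp add: sum_subtractf sum_distrib_left sum_distrib_right algebra_simps)
  also have "\<dots> = (\<Sum>\<rho>\<in>UNIV. X \<rho> t * (\<Sum>\<sigma>\<in>UNIV. Q \<rho> \<sigma> * (g \<sigma> - g \<rho>)))"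
    by (subst sum.swap) (simp add: sum_subtractf[symmetric] sum_distrib_left algebra_simps)
  finally show ?thesis .
qed

definition sis_flip_rate :: "real \<Rightarrow> real \<Rightarrow> (real \<Rightarrow> real) \<Rightarrow> 'v set set
    \<Rightarrow> ('v::finite \<Rightarrow> bool) \<Rightarrow> 'v \<Rightarrow> real" where
  "sis_flip_rate gam tau f E \<rho> l = (if \<rho> l then gam
     else tau * (\<Sum>h\<in>{h \<in> E. l \<in> h}. f (real (N_inf h \<rho>))))"

lemma sum_sis_rate_eq_sum_flips:
  fixes \<rho> :: "'v::finite \<Rightarrow> bool"
  shows "(\<Sum>\<sigma>\<in>UNIV. sis_rate gam tau f E \<rho> \<sigma> * h \<sigma>)
       = (\<Sum>l\<in>UNIV. sis_flip_rate gam tau f E \<rho> l * h (\<rho>(l := \<not> \<rho> l)))"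
proof -
  have "(\<Sum>\<sigma>\<in>UNIV. sis_rate gam tau f E \<rho> \<sigma> * h \<sigma>)
     = (\<Sum>\<sigma>\<in>UNIV. \<Sum>l\<in>UNIV. if \<sigma> = \<rho>(l := \<not> \<rho> l) then sis_flip_rate gam tau f E \<rho> l * h \<sigma> else 0)"
    unfolding sis_rate_def sis_flip_rate_def sum_distrib_right by (intro sum.cong refl) auto
  also have "\<dots> = (\<Sum>l\<in>UNIV. sis_flip_rate gam tau f E \<rho> l * h (\<rho>(l := \<not> \<rho> l)))"
    by (subst sum.swap) (simp add: sum.delta')
  finally show ?thesis .
qed

lemma num_inf_flip:
  fixes \<rho> :: "'v::finite \<Rightarrow> bool"
  shows "real (num_inf (\<rho>(l := \<not> \<rho> l))) = real (num_inf \<rho>) + (if \<rho> l then -1 else 1)"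
proof (cases "\<rho> l")
  case True
  then have "{x. (\<rho>(l := \<not> \<rho> l)) x} = {x. \<rho> x} - {l}" by auto
  moreover have "card {x. \<rho> x} > 0"
    using True by (auto simp: card_gt_0_iff)
  ultimately show ?thesis
    using True by (simp add: num_inf_def of_nat_diff)
next
  case False
  then have "{x. (\<rho>(l := \<not> \<rho> l)) x} = insert l {x. \<rho> x}" by auto
  then show ?thesis using False by (simp add: num_inf_def)
qed

lemma sis_generator_num_inf:
  fixes \<rho> :: "'v::finite \<Rightarrow> bool"
  shows "(\<Sum>\<sigma>\<in>UNIV. sis_rate gam tau f E \<rho> \<sigma> * (real (num_inf \<sigma>) - real (num_inf \<rho>)))
       = tau * N_SI f E \<rho> - gam * real (num_inf \<rho>)"
proof -
  have "(\<Sum>\<sigma>\<in>UNIV. sis_rate gam tau f E \<rho> \<sigma> * (real (num_inf \<sigma>) - real (num_inf \<rho>)))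
     = (\<Sum>l\<in>UNIV. if \<rho> l then - gam else tau * (\<Sum>h\<in>{h \<in> E. l \<in> h}. f (real (N_inf h \<rho>))))"
    unfolding sum_sis_rate_eq_sum_flips by (intro sum.cong refl) (simp add: num_inf_flip sis_flip_rate_def)
  also have "\<dots> = (\<Sum>l\<in>{l. \<rho> l}. - gam)
      + (\<Sum>l\<in>{l. \<not> \<rho> l}. tau * (\<Sum>h\<in>{h \<in> E. l \<in> h}. f (real (N_inf h \<rho>))))"
    by (subst sum.If_cases) (auto intro!: arg_cong2[where f="(+)"] sum.cong)
  also have "\<dots> = tau * N_SI f E \<rho> - gam * real (num_inf \<rho>)"
    unfolding N_SI_def num_inf_def by (simp add: sum_distrib_left)
  finally show ?thesis .
qed

lemma num_inf_le_card: "num_inf (\<sigma> :: 'v::finite \<Rightarrow> bool) \<le> CARD('v)"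
  unfolding num_inf_def by (rule card_mono) auto

theorem theorem1:
  fixes E :: "('v::finite) set set"
    and gam tau c :: real
    and X :: "('v \<Rightarrow> bool) \<Rightarrow> real \<Rightarrow> real"
  assumes "gam > 0" and "tau > 0" and "c > 0"
    and prob_nonneg: "\<And>\<sigma> t. t \<ge> 0 \<Longrightarrow> X \<sigma> t \<ge> 0"
    and prob_sum: "\<And>t. t \<ge> 0 \<Longrightarrow> (\<Sum>\<sigma>\<in>UNIV. X \<sigma> t) = 1"
    and master: "\<And>\<sigma> t. t \<ge> 0 \<Longrightarrow>
       ((\<lambda>s. X \<sigma> s) has_real_derivative
          ((\<Sum>\<sigma>'\<in>UNIV - {\<sigma>}. X \<sigma>' t * sis_rate gam tau (f_sat c) E \<sigma>' \<sigma>)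
           - X \<sigma> t * (\<Sum>\<sigma>'\<in>UNIV - {\<sigma>}. sis_rate gam tau (f_sat c) E \<sigma> \<sigma>')))
        (at t within {0..})"
  shows "\<And>t. t \<ge> 0 \<Longrightarrow>
      let Sm = (\<lambda>s. \<Sum>\<sigma>\<in>UNIV. real (CARD('v) - num_inf \<sigma>) * X \<sigma> s);
          Im = (\<lambda>s. \<Sum>\<sigma>\<in>UNIV. real (num_inf \<sigma>) * X \<sigma> s);
          SIm = (\<lambda>s. \<Sum>\<sigma>\<in>UNIV. N_SI (f_sat c) E \<sigma> * X \<sigma> s)
      in (Sm has_real_derivative (gam * Im t - tau * SIm t)) (at t within {0..})
       \<and> (Im has_real_derivative (tau * SIm t - gam * Im t)) (at t within {0..})"
proof -
  fix t :: real assume "t \<ge> 0"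
  let ?Q = "sis_rate gam tau (f_sat c) E" and ?drift = "\<lambda>\<rho>. tau * N_SI (f_sat c) E \<rho> - gam * real (num_inf \<rho>)"
  note deriv = expectation_has_real_derivative_master[OF master[OF \<open>t \<ge> 0\<close>]]
  have "(\<Sum>\<sigma>\<in>UNIV. ?Q \<rho> \<sigma> * (real (CARD('v) - num_inf \<sigma>) - real (CARD('v) - num_inf \<rho>)))
      = (\<Sum>\<sigma>\<in>UNIV. - (?Q \<rho> \<sigma> * (real (num_inf \<sigma>) - real (num_inf \<rho>))))" for \<rho>
    by (intro sum.cong refl) (simp add: num_inf_le_card of_nat_diff algebra_simps)
  then have generator_num_sus:
      "(\<Sum>\<sigma>\<in>UNIV. ?Q \<rho> \<sigma> * (real (CARD('v) - num_inf \<sigma>) - real (CARD('v) - num_inf \<rho>))) = - ?drift \<rho>" for \<rho>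
    by (simp only: sum_negf sis_generator_num_inf)
  have dS: "((\<lambda>s. \<Sum>\<sigma>\<in>UNIV. real (CARD('v) - num_inf \<sigma>) * X \<sigma> s) has_real_derivative
      - (\<Sum>\<rho>\<in>UNIV. X \<rho> t * ?drift \<rho>)) (at t within {0..})"
    using deriv[of "\<lambda>\<sigma>. real (CARD('v) - num_inf \<sigma>)"]
    by (simp only: generator_num_sus mult_minus_right sum_negf)
  have dI: "((\<lambda>s. \<Sum>\<sigma>\<in>UNIV. real (num_inf \<sigma>) * X \<sigma> s) has_real_derivative
      (\<Sum>\<rho>\<in>UNIV. X \<rho> t * ?drift \<rho>)) (at t within {0..})"
    using deriv[of "\<lambda>\<sigma>. real (num_inf \<sigma>)"] by (simp only: sis_generator_num_inf)
  have "(\<Sum>\<rho>\<in>UNIV. X \<rho> t * ?drift \<rho>)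
      = tau * (\<Sum>\<sigma>\<in>UNIV. N_SI (f_sat c) E \<sigma> * X \<sigma> t) - gam * (\<Sum>\<sigma>\<in>UNIV. real (num_inf \<sigma>) * X \<sigma> t)"
    by (simp add: sum_subtractf sum_distrib_left algebra_simps)
  with dS dI show "?thesis t"
    by (simp only: Let_def minus_diff_eq)
qed

end
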